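(* Let $\mathcal{H}$ be a hedgehog with support function $h$ and let $k>2$ be an integer. Then the $k$th Order Midpoint Set of $\mathcal{H}$ is parameterized by \[ \Omega_{\mathcal{H},k}(s)=\frac{2}{k}\sum_{j=1}^{k}h\Big(s+\frac{2\pi j}{k}\Big)\Big(\cos\Big(s+\frac{2\pi j}{k}\Big),\sin\Big(s+\frac{2\pi j}{k}\Big)\Big),\qquad s\in\Big[0,\frac{2\pi}{k}\Big]; \] that is, for every $s$, the center of mass of the equiangular $k$-gon circumscribed about $\mathcal{H}$ at parameter $s$ equals the right-hand side.
   Context: Write $u(s)=(\cos s,\sin s)$, $u'(s)=(-\sin s,\cos s)$. A hedgehog is a closed planar curve determined by a smooth $2\pi$-periodic function $h$ (its support function) via $\mathcal{H}(s)=h(s)u(s)+h'(s)u'(s)$. For $s\in\mathbb{R}$ and $j\in\mathbb{Z}$ let $\ell_j(s)=\{x:\langle x,u(s+\tfrac{2\pi j}{k})\rangle=h(s+\tfrac{2\pi j}{k})\}$ (support lines). The equiangular $k$-gon circumscribed about $\mathcal{H}$ at parameter $s$ has vertices $v_j(s)=\ell_j(s)\cap\ell_{j+1}(s)$, $j=0,\dots,k-1$ (indices mod $k$), and its center of mass is $\frac1k\sum_{j=0}^{k-1}v_j(s)$. The $k$th Order Midpoint Set $\Omega_{\mathcal{H},k}$ is the set of centers of mass of all these equiangular circumscribed $k$-gons. *)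

theory Defs
  imports "HOL-Analysis.Analysis"
begin

definition uvec :: "real \<Rightarrow> real \<times> real" where
  "uvec s = (cos s, sin s)"

definition uvec' :: "real \<Rightarrow> real \<times> real" where
  "uvec' s = (- sin s, cos s)"

definition smooth_fun :: "(real \<Rightarrow> real) \<Rightarrow> bool" where
  "smooth_fun h \<longleftrightarrow> (\<forall>n x. ((deriv ^^ n) h) differentiable (at x))"

definition is_support_function :: "(real \<Rightarrow> real) \<Rightarrow> bool" where
  "is_support_function h \<longleftrightarrow> smooth_fun h \<and> (\<forall>s. h (s + 2 * pi) = h s)"

definition hedgehog :: "(real \<Rightarrow> real) \<Rightarrow> real \<Rightarrow> real \<times> real" where
  "hedgehog h s = h s *\<^sub>R uvec s + deriv h s *\<^sub>R uvec' s"

definition support_line :: "(real \<Rightarrow> real) \<Rightarrow> nat \<Rightarrow> real \<Rightarrow> int \<Rightarrow> (real \<times> real) set" where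
  "support_line h k s j = {x. inner x (uvec (s + 2 * pi * of_int j / real k)) = h (s + 2 * pi * of_int j / real k)}"

definition gon_vertex :: "(real \<Rightarrow> real) \<Rightarrow> nat \<Rightarrow> real \<Rightarrow> int \<Rightarrow> real \<times> real" where
  "gon_vertex h k s j = (THE x. x \<in> support_line h k s j \<inter> support_line h k s (j + 1))"

definition gon_center :: "(real \<Rightarrow> real) \<Rightarrow> nat \<Rightarrow> real \<Rightarrow> real \<times> real" where
  "gon_center h k s = (1 / real k) *\<^sub>R (\<Sum>j<k. gon_vertex h k s (int j))"

definition midpoint_set :: "(real \<Rightarrow> real) \<Rightarrow> nat \<Rightarrow> (real \<times> real) set" where
  "midpoint_set h k = range (gon_center h k)"

end

theory Submission
  imports Defs "HOL-Library.Periodic_Fun"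
begin

text \<open>
  Write \<open>\<theta>\<^sub>j = s + 2\<pi>j/k\<close> and \<open>\<alpha> = 2\<pi>/k\<close>. Solving for the vertex in the frame
  \<open>u(\<theta>\<^sub>j), u'(\<theta>\<^sub>j)\<close> and rewriting it symmetrically gives
  \<open>v\<^sub>j = h(\<theta>\<^sub>j) u(\<theta>\<^sub>j) + h(\<theta>\<^sub>j\<^sub>+\<^sub>1) u(\<theta>\<^sub>j\<^sub>+\<^sub>1) + cot \<alpha> (h(\<theta>\<^sub>j\<^sub>+\<^sub>1) u'(\<theta>\<^sub>j\<^sub>+\<^sub>1) - h(\<theta>\<^sub>j) u'(\<theta>\<^sub>j))\<close>.
  Summing over a full turn, the cotangent terms telescope away and every term
  \<open>h(\<theta>\<^sub>j) u(\<theta>\<^sub>j)\<close> occurs twice. The parameters \<open>s\<close> and \<open>s + \<alpha>\<close> give the same polygon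
  with relabelled vertices, so one period of \<open>s\<close> already traces the whole midpoint set.
\<close>

lemma uvec_periodic: "uvec (t + 2 * pi) = uvec t"
  by (simp add: uvec_def)

lemma uvec'_periodic: "uvec' (t + 2 * pi) = uvec' t"
  by (simp add: uvec'_def)

lemma uvec_add: "uvec (t + a) = cos a *\<^sub>R uvec t + sin a *\<^sub>R uvec' t"
  by (simp add: uvec_def uvec'_def cos_add sin_add algebra_simps)

lemma uvec'_add: "uvec' (t + a) = cos a *\<^sub>R uvec' t - sin a *\<^sub>R uvec t"
  by (simp add: uvec_def uvec'_def cos_add sin_add algebra_simps)

lemma inner_uvec_uvec [simp]: "inner (uvec t) (uvec t) = 1"
  and inner_uvec'_uvec' [simp]: "inner (uvec' t) (uvec' t) = 1"
  and inner_uvec'_uvec [simp]: "inner (uvec' t) (uvec t) = 0"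
  and inner_uvec_uvec' [simp]: "inner (uvec t) (uvec' t) = 0"
  by (simp_all add: uvec_def uvec'_def inner_prod_def power2_eq_square[symmetric])

lemma uvec_frame_decomposition:
  "x = inner x (uvec t) *\<^sub>R uvec t + inner x (uvec' t) *\<^sub>R uvec' t"
  by (cases x) (simp add: uvec_def uvec'_def inner_prod_def algebra_simps
      power2_eq_square[symmetric] distrib_left[symmetric])

lemma inner_uvec_add:
  "inner x (uvec (t + a)) = cos a * inner x (uvec t) + sin a * inner x (uvec' t)"
  by (simp add: uvec_add inner_add_right)

lemma inner_uvec_pair_iff:
  assumes "sin a \<noteq> 0"
  shows "inner x (uvec t) = p \<and> inner x (uvec (t + a)) = q \<longleftrightarrow>
    x = p *\<^sub>R uvec t + ((q - p * cos a) / sin a) *\<^sub>R uvec' t"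
proof
  assume "inner x (uvec t) = p \<and> inner x (uvec (t + a)) = q"
  then have "inner x (uvec t) = p" "cos a * p + sin a * inner x (uvec' t) = q"
    by (auto simp only: inner_uvec_add)
  then have "inner x (uvec t) = p" "inner x (uvec' t) = (q - p * cos a) / sin a"
    using assms by (simp_all add: field_simps)
  then show "x = p *\<^sub>R uvec t + ((q - p * cos a) / sin a) *\<^sub>R uvec' t"
    using uvec_frame_decomposition[of x t] by simp
next
  assume "x = p *\<^sub>R uvec t + ((q - p * cos a) / sin a) *\<^sub>R uvec' t"
  then show "inner x (uvec t) = p \<and> inner x (uvec (t + a)) = q"
    using assms by (simp only: inner_uvec_add) (simp add: inner_add_left)
qed

lemma frame_point_symmetric_form:
  assumes "sin a \<noteq> 0"
  shows "p *\<^sub>R uvec t + ((q - p * cos a) / sin a) *\<^sub>R uvec' t =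
    p *\<^sub>R uvec t + q *\<^sub>R uvec (t + a) + (cos a / sin a) *\<^sub>R (q *\<^sub>R uvec' (t + a) - p *\<^sub>R uvec' t)"
proof -
  have "q *\<^sub>R uvec (t + a) + (cos a / sin a) *\<^sub>R (q *\<^sub>R uvec' (t + a))
      = (q / sin a) *\<^sub>R (sin a *\<^sub>R uvec (t + a) + cos a *\<^sub>R uvec' (t + a))"
    using assms by (simp add: algebra_simps)
  also have "sin a *\<^sub>R uvec (t + a) + cos a *\<^sub>R uvec' (t + a) = uvec' t"
    using uvec'_add[of "t + a" "- a"] by (simp add: add.commute)
  finally show ?thesis
    by (simp add: algebra_simps diff_divide_distrib)
qed

lemma sin_two_pi_div_gt_zero:
  assumes "2 < k"
  shows "0 < sin (2 * pi / real k)"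
proof (rule sin_gt_zero)
  show "0 < 2 * pi / real k" and "2 * pi / real k < pi"
    using assms by (simp_all add: field_simps)
qed

lemma support_line_shift_param:
  "support_line h k (s + 2 * pi / real k) j = support_line h k s (j + 1)"
proof -
  have "s + 2 * pi / real k + 2 * pi * of_int j / real k = s + 2 * pi * of_int (j + 1) / real k"
    by (simp add: add_divide_distrib distrib_left)
  then show ?thesis
    by (simp only: support_line_def)
qed

lemma support_line_periodic:
  assumes "\<forall>s. h (s + 2 * pi) = h s" and "0 < k"
  shows "support_line h k s (j + int k) = support_line h k s j"
proof -
  have "s + 2 * pi * of_int (j + int k) / real k = (s + 2 * pi * of_int j / real k) + 2 * pi"
    using assms(2) by (simp add: field_simps)
  then show ?thesis
    by (simp only: support_line_def uvec_periodic assms(1)[rule_format])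
qed

lemma gon_vertex_shift_param:
  "gon_vertex h k (s + 2 * pi / real k) j = gon_vertex h k s (j + 1)"
  by (simp add: gon_vertex_def support_line_shift_param)

lemma gon_vertex_periodic:
  assumes "\<forall>s. h (s + 2 * pi) = h s" and "0 < k"
  shows "gon_vertex h k s (j + int k) = gon_vertex h k s j"
  using support_line_periodic[OF assms, of s j] support_line_periodic[OF assms, of s "j + 1"]
  by (simp add: gon_vertex_def algebra_simps)

lemma gon_vertex_eq:
  fixes s :: real and j :: int
  assumes "2 < k"
  defines "t \<equiv> s + 2 * pi * of_int j / real k" and "a \<equiv> 2 * pi / real k"
  shows "gon_vertex h k s j = h t *\<^sub>R uvec t + h (t + a) *\<^sub>R uvec (t + a)
    + (cos a / sin a) *\<^sub>R (h (t + a) *\<^sub>R uvec' (t + a) - h t *\<^sub>R uvec' t)"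
proof -
  have sin_a: "sin a \<noteq> 0"
    using sin_two_pi_div_gt_zero[OF assms(1)] by (simp add: a_def)
  have next_angle: "s + 2 * pi * of_int (j + 1) / real k = t + a"
    by (simp add: t_def a_def add_divide_distrib distrib_left)
  have "support_line h k s j \<inter> support_line h k s (j + 1)
      = {x. inner x (uvec t) = h t \<and> inner x (uvec (t + a)) = h (t + a)}"
    unfolding support_line_def t_def[symmetric] next_angle by blast
  also have "\<dots> = {h t *\<^sub>R uvec t + ((h (t + a) - h t * cos a) / sin a) *\<^sub>R uvec' t}"
    unfolding inner_uvec_pair_iff[OF sin_a] by blast
  finally show ?thesis
    by (simp add: gon_vertex_def frame_point_symmetric_form[OF sin_a])
qed

lemma sum_lessThan_Suc_shift_eq:
  fixes f :: "nat \<Rightarrow> 'a::ab_group_add"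
  assumes "f n = f 0"
  shows "(\<Sum>i<n. f (Suc i)) = (\<Sum>i<n. f i)"
  using sum_lessThan_telescope[of f n] assms by (simp add: sum_subtractf)

lemma gon_center_shift_param:
  assumes "\<forall>s. h (s + 2 * pi) = h s" and "0 < k"
  shows "gon_center h k (s + 2 * pi / real k) = gon_center h k s"
proof -
  have "(\<Sum>j<k. gon_vertex h k s (int j + 1)) = (\<Sum>j<k. gon_vertex h k s (int j))"
    using sum_lessThan_Suc_shift_eq[of "\<lambda>j. gon_vertex h k s (int j)" k]
      gon_vertex_periodic[OF assms, of s 0]
    by (simp add: add.commute)
  then show ?thesis
    unfolding gon_center_def gon_vertex_shift_param by simp
qed

lemma range_periodic_eq_image:
  fixes f :: "real \<Rightarrow> 'a"
  assumes "0 < p" and "\<And>t. f (t + p) = f t"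
  shows "range f = f ` {0..p}"
proof -
  interpret periodic_fun_simple f p
    using assms(2) by unfold_locales
  have "f t \<in> f ` {0..p}" for t
  proof
    have "t = p * frac (t / p) + of_int \<lfloor>t / p\<rfloor> * p"
      using assms(1) by (simp add: frac_def field_simps)
    then show "f t = f (p * frac (t / p))"
      by (metis plus_of_int)
    show "p * frac (t / p) \<in> {0..p}"
      using assms(1) frac_lt_1[of "t / p"] by simp
  qed
  then show ?thesis
    by auto
qed

lemma gon_center_eq:
  assumes periodic: "\<forall>s. h (s + 2 * pi) = h s" and "2 < k"
  shows "gon_center h k s = (2 / real k) *\<^sub>R
    (\<Sum>j=1..k. h (s + 2 * pi * real j / real k) *\<^sub>R uvec (s + 2 * pi * real j / real k))"
proof -
  define a where "a = 2 * pi / real k"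
  define \<theta> where "\<theta> j = s + 2 * pi * real j / real k" for j
  define F where "F j = h (\<theta> j) *\<^sub>R uvec (\<theta> j)" for j
  define G where "G j = h (\<theta> j) *\<^sub>R uvec' (\<theta> j)" for j
  have \<theta>_Suc: "\<theta> (Suc j) = \<theta> j + a" for j
    by (simp add: \<theta>_def a_def add_divide_distrib distrib_left)
  have \<theta>_k: "\<theta> k = \<theta> 0 + 2 * pi"
    using assms(2) by (simp add: \<theta>_def)
  have F_k: "F k = F 0" and G_k: "G k = G 0"
    using periodic by (simp_all add: F_def G_def \<theta>_k uvec_periodic uvec'_periodic)
  have vertex: "gon_vertex h k s (int j) = F j + F (Suc j) + (cos a / sin a) *\<^sub>R (G (Suc j) - G j)" for j
    using gon_vertex_eq[OF assms(2), where s = s and j = "int j" and h = h]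
    by (simp add: F_def G_def \<theta>_Suc flip: a_def) (simp add: \<theta>_def)
  have "(\<Sum>j<k. gon_vertex h k s (int j))
      = (\<Sum>j<k. F j) + (\<Sum>j<k. F (Suc j)) + (cos a / sin a) *\<^sub>R (G k - G 0)"
    by (simp add: vertex sum.distrib sum_lessThan_telescope flip: scaleR_sum_right)
  also have "\<dots> = 2 *\<^sub>R (\<Sum>j<k. F (Suc j))"
    by (simp add: G_k sum_lessThan_Suc_shift_eq[OF F_k] scaleR_2)
  also have "(\<Sum>j<k. F (Suc j)) = (\<Sum>j=1..k. F j)"
    by (simp add: sum.atLeast1_atMost_eq)
  finally show ?thesis
    by (simp add: gon_center_def F_def \<theta>_def)
qed

theorem proposition4p5:
  fixes h :: "real \<Rightarrow> real" and k :: nat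
  assumes "is_support_function h" and "k > 2"
  defines "\<Omega> \<equiv> (\<lambda>s. (2 / real k) *\<^sub>R
      (\<Sum>j=1..k. h (s + 2 * pi * real j / real k) *\<^sub>R uvec (s + 2 * pi * real j / real k)))"
  shows "(\<forall>s. gon_center h k s = \<Omega> s) \<and> midpoint_set h k = \<Omega> ` {0 .. 2 * pi / real k}"
proof -
  have periodic: "\<forall>s. h (s + 2 * pi) = h s"
    using assms(1) by (simp add: is_support_function_def)
  have center: "gon_center h k = \<Omega>"
    unfolding \<Omega>_def using gon_center_eq[OF periodic assms(2)] by blast
  have "midpoint_set h k = gon_center h k ` {0 .. 2 * pi / real k}"
    unfolding midpoint_set_def
  proof (rule range_periodic_eq_image)
    show "0 < 2 * pi / real k"
      using assms(2) by simp
    show "gon_center h k (s + 2 * pi / real k) = gon_center h k s" for s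
      using gon_center_shift_param[OF periodic] assms(2) by simp
  qed
  with center show ?thesis
    by simp
qed

end
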